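(* Let $I$ be a regular and $\mathcal{H}$-positively-homogeneous conditional indicator w.r.t. $\mathcal{H}$. Then for all $X\in\mathbb{D}_I$ and $h\in\mathbb{L}^0(\mathbb{R},\mathcal{H})$, $$I(hX)=h^+I(X)+h^-I(-X),$$ where $h^+=\max(h,0)$ and $h^-=\max(-h,0)$.
   Context: Let $(\Omega,\mathcal{F},\mathbb{P})$ be a probability space with $\mathcal{F}$ complete, and $\mathcal{H}\subseteq\mathcal{F}$ a complete sub-$\sigma$-algebra. $\overline{\mathbb{R}}=\mathbb{R}\cup\{\pm\infty\}$ with conventions $r\pm\infty=\pm\infty$, $\infty-\infty=0$, $\infty+\infty=\infty$, $0\times(\pm\infty)=0$; $\mathbb{L}^0(G,\mathcal{G})$ is the set of $\mathcal{G}$-measurable random variables a.s. valued in $G$. $\operatorname{ess\,sup}_{\mathcal{H}}(X)$ is the smallest $\mathcal{H}$-measurable random variable dominating $X$ a.s., $\operatorname{ess\,inf}_{\mathcal{H}}(X)=-\operatorname{ess\,sup}_{\mathcal{H}}(-X)$. A conditional indicator w.r.t. $\mathcal{H}$ is a map $I:\mathbb{D}_I\to\mathbb{L}^0(\overline{\mathbb{R}},\mathcal{H})$, $0\in\mathbb{D}_I\subseteq\mathbb{L}^0(\overline{\mathbb{R}},\mathcal{F})$, with $I(X)\in[\operatorname{ess\,inf}_{\mathcal{H}}(X),\operatorname{ess\,sup}_{\mathcal{H}}(X)]$ a.s. and $\mathbb{D}_I+\mathbb{L}^0(\overline{\mathbb{R}},\mathcal{H})\subseteq\mathbb{D}_I$.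 $\mathbb{D}_I$ is $\mathcal{H}$-decomposable if $X1_H+Y1_{\Omega\setminus H}\in\mathbb{D}_I$ for all $X,Y\in\mathbb{D}_I$, $H\in\mathcal{H}$. $I$ is regular if $\mathbb{D}_I$ is $\mathcal{H}$-decomposable and for $X,Y\in\mathbb{D}_I$, $H\in\mathcal{H}$, $X1_H=Y1_H$ implies $I(X)1_H=I(Y)1_H$. $I$ is $\mathcal{H}$-positively-homogeneous if for every $\alpha\in\mathbb{L}^0(\mathbb{R}_+,\mathcal{H})$, $\alpha\mathbb{D}_I\subseteq\mathbb{D}_I$ and $I(\alpha X)=\alpha I(X)$ for $X\in\mathbb{D}_I$. *)

theory Defs
  imports "HOL-Probability.Probability"
begin

(* Addition on the extended reals with the paper's conventions:
   r +- oo = +-oo, oo + oo = oo, (-oo) + (-oo) = -oo, but oo - oo = 0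
   (Isabelle's ereal addition gives oo + (-oo) = oo, so we adjust that case). *)
definition epl :: "ereal \<Rightarrow> ereal \<Rightarrow> ereal" where
  "epl x y = (if (x = \<infinity> \<and> y = -\<infinity>) \<or> (x = -\<infinity> \<and> y = \<infinity>) then 0 else x + y)"

definition complete_sets :: "'a measure \<Rightarrow> bool" where
  "complete_sets M \<longleftrightarrow> (\<forall>N \<in> null_sets M. \<forall>A. A \<subseteq> N \<longrightarrow> A \<in> sets M)"

(* the sub-sigma-algebra H is complete (w.r.t. P): it contains all P-null sets
   (hence all subsets of them, since F is complete) *)
definition complete_sub :: "'a measure \<Rightarrow> 'a measure \<Rightarrow> bool" where
  "complete_sub M H \<longleftrightarrow> (\<forall>N \<in> null_sets M. \<forall>A. A \<subseteq> N \<longrightarrow> A \<in> sets H)"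

definition is_cond_ess_sup :: "'a measure \<Rightarrow> 'a measure \<Rightarrow> ('a \<Rightarrow> ereal) \<Rightarrow> ('a \<Rightarrow> ereal) \<Rightarrow> bool" where
  "is_cond_ess_sup M H X S \<longleftrightarrow>
     S \<in> borel_measurable H \<and> (AE \<omega> in M. X \<omega> \<le> S \<omega>) \<and>
     (\<forall>S' \<in> borel_measurable H. (AE \<omega> in M. X \<omega> \<le> S' \<omega>) \<longrightarrow> (AE \<omega> in M. S \<omega> \<le> S' \<omega>))"

definition cond_ess_sup :: "'a measure \<Rightarrow> 'a measure \<Rightarrow> ('a \<Rightarrow> ereal) \<Rightarrow> 'a \<Rightarrow> ereal" where
  "cond_ess_sup M H X = (SOME S. is_cond_ess_sup M H X S)"

definition cond_ess_inf :: "'a measure \<Rightarrow> 'a measure \<Rightarrow> ('a \<Rightarrow> ereal) \<Rightarrow> 'a \<Rightarrow> ereal" where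
  "cond_ess_inf M H X = (\<lambda>\<omega>. - cond_ess_sup M H (\<lambda>\<omega>. - X \<omega>) \<omega>)"

(* Random variables are
   represented by functions; since the paper works with a.s.-equivalence classes,
   D is closed under a.s. modification and I respects a.s. equality. *)
definition cond_indicator ::
  "'a measure \<Rightarrow> 'a measure \<Rightarrow> ('a \<Rightarrow> ereal) set \<Rightarrow> (('a \<Rightarrow> ereal) \<Rightarrow> 'a \<Rightarrow> ereal) \<Rightarrow> bool" where
  "cond_indicator M H D I \<longleftrightarrow>
     (\<lambda>_. 0) \<in> D \<and> D \<subseteq> borel_measurable M \<and>
     (\<forall>X \<in> D. \<forall>Y \<in> borel_measurable M. (AE \<omega> in M. X \<omega> = Y \<omega>) \<longrightarrow>
        Y \<in> D \<and> (AE \<omega> in M. I X \<omega> = I Y \<omega>)) \<and>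
     (\<forall>X \<in> D. I X \<in> borel_measurable H \<and>
        (AE \<omega> in M. cond_ess_inf M H X \<omega> \<le> I X \<omega> \<and> I X \<omega> \<le> cond_ess_sup M H X \<omega>)) \<and>
     (\<forall>X \<in> D. \<forall>Y \<in> borel_measurable H. (\<lambda>\<omega>. epl (X \<omega>) (Y \<omega>)) \<in> D)"

definition decomposable :: "'a measure \<Rightarrow> ('a \<Rightarrow> ereal) set \<Rightarrow> bool" where
  "decomposable H D \<longleftrightarrow>
     (\<forall>X \<in> D. \<forall>Y \<in> D. \<forall>A \<in> sets H. (\<lambda>\<omega>. if \<omega> \<in> A then X \<omega> else Y \<omega>) \<in> D)"

definition regular_ind ::
  "'a measure \<Rightarrow> 'a measure \<Rightarrow> ('a \<Rightarrow> ereal) set \<Rightarrow> (('a \<Rightarrow> ereal) \<Rightarrow> 'a \<Rightarrow> ereal) \<Rightarrow> bool" where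
  "regular_ind M H D I \<longleftrightarrow> decomposable H D \<and>
     (\<forall>X \<in> D. \<forall>Y \<in> D. \<forall>A \<in> sets H.
        (AE \<omega> in M. \<omega> \<in> A \<longrightarrow> X \<omega> = Y \<omega>) \<longrightarrow> (AE \<omega> in M. \<omega> \<in> A \<longrightarrow> I X \<omega> = I Y \<omega>))"

definition pos_homogeneous ::
  "'a measure \<Rightarrow> 'a measure \<Rightarrow> ('a \<Rightarrow> ereal) set \<Rightarrow> (('a \<Rightarrow> ereal) \<Rightarrow> 'a \<Rightarrow> ereal) \<Rightarrow> bool" where
  "pos_homogeneous M H D I \<longleftrightarrow>
     (\<forall>\<alpha> :: 'a \<Rightarrow> real. \<alpha> \<in> borel_measurable H \<longrightarrow> (AE \<omega> in M. 0 \<le> \<alpha> \<omega>) \<longrightarrow>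
       (\<forall>X \<in> D. (\<lambda>\<omega>. ereal (\<alpha> \<omega>) * X \<omega>) \<in> D \<and>
          (AE \<omega> in M. I (\<lambda>\<omega>. ereal (\<alpha> \<omega>) * X \<omega>) \<omega> = ereal (\<alpha> \<omega>) * I X \<omega>)))"

end

theory Submission
  imports Defs
begin

text \<open>On the \<open>\<H>\<close>-event \<open>{h \<ge> 0}\<close> one has \<open>hX = h\<^sup>+X\<close>, and on its complement
  \<open>hX = h\<^sup>-(-X)\<close>. Regularity makes \<open>I\<close> local on \<open>\<H>\<close>-events, so \<open>I(hX)\<close> is
  \<open>I(h\<^sup>+X)\<close> on the first event and \<open>I(h\<^sup>-(-X))\<close> on the second, and positive homogeneity
  pulls out \<open>h\<^sup>+\<close> and \<open>h\<^sup>-\<close>. The term that should vanish does so because \<open>0 \<cdot> (\<plusminus>\<infinity>) = 0\<close>.\<close>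

lemma ereal_times_eq_pos_neg_part:
  "ereal h * x = (if 0 \<le> h then ereal (max h 0) * x else ereal (max (- h) 0) * - x)"
proof (cases "0 \<le> h")
  case False
  then have "ereal (- h) * - x = ereal h * x"
    by (metis ereal_uminus_uminus ereal_mult_minus_left ereal_mult_minus_right uminus_ereal.simps(1))
  with False show ?thesis
    by (simp add: max_def)
qed (simp add: max_def)

lemma ereal_pos_neg_part_combination:
  "ereal (max h 0) * a + ereal (max (- h) 0) * b =
     (if 0 \<le> h then ereal (max h 0) * a else ereal (max (- h) 0) * b)"
  by (simp add: max_def zero_ereal_def[symmetric])

lemma cond_indicator_measurable:
  assumes "cond_indicator M H D I" "X \<in> D"
  shows "X \<in> borel_measurable M"
  using assms unfolding cond_indicator_def by auto

lemma cond_indicator_AE_cong: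
  assumes "cond_indicator M H D I" "X \<in> D" "Y \<in> borel_measurable M" "AE \<omega> in M. X \<omega> = Y \<omega>"
  shows "Y \<in> D"
  using assms unfolding cond_indicator_def by simp

lemma pos_homogeneousD:
  assumes "pos_homogeneous M H D I" "\<alpha> \<in> borel_measurable H" "\<And>\<omega>. 0 \<le> \<alpha> \<omega>" "X \<in> D"
  shows "(\<lambda>\<omega>. ereal (\<alpha> \<omega>) * X \<omega>) \<in> D"
    and "AE \<omega> in M. I (\<lambda>\<omega>. ereal (\<alpha> \<omega>) * X \<omega>) \<omega> = ereal (\<alpha> \<omega>) * I X \<omega>"
  using assms unfolding pos_homogeneous_def by simp_all

lemma regular_ind_paste_mem:
  assumes "regular_ind M H D I" "A \<in> sets H" "X \<in> D" "Y \<in> D"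
  shows "(\<lambda>\<omega>. if \<omega> \<in> A then X \<omega> else Y \<omega>) \<in> D"
  using assms unfolding regular_ind_def decomposable_def by simp

lemma regular_ind_local:
  assumes "regular_ind M H D I" "X \<in> D" "Y \<in> D" "A \<in> sets H"
    and "\<And>\<omega>. \<omega> \<in> A \<Longrightarrow> X \<omega> = Y \<omega>"
  shows "AE \<omega> in M. \<omega> \<in> A \<longrightarrow> I X \<omega> = I Y \<omega>"
  using assms unfolding regular_ind_def by simp

lemma regular_ind_paste:
  assumes "subalgebra M H" "cond_indicator M H D I" "regular_ind M H D I"
    and "A \<in> sets H" "Y\<^sub>1 \<in> D" "Y\<^sub>2 \<in> D" "Z \<in> borel_measurable M"
    and Z_eq: "\<And>\<omega>. \<omega> \<in> space M \<Longrightarrow> Z \<omega> = (if \<omega> \<in> A then Y\<^sub>1 \<omega> else Y\<^sub>2 \<omega>)"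
  shows "Z \<in> D" "AE \<omega> in M. I Z \<omega> = (if \<omega> \<in> A then I Y\<^sub>1 \<omega> else I Y\<^sub>2 \<omega>)"
proof -
  have space_H: "space H = space M"
    using \<open>subalgebra M H\<close> by (simp add: subalgebra_def)
  have "AE \<omega> in M. (if \<omega> \<in> A then Y\<^sub>1 \<omega> else Y\<^sub>2 \<omega>) = Z \<omega>"
    by (rule AE_I2) (simp add: Z_eq)
  with assms(2) regular_ind_paste_mem[OF assms(3-6)] \<open>Z \<in> borel_measurable M\<close>
  show Z: "Z \<in> D"
    by (rule cond_indicator_AE_cong)
  have "A \<subseteq> space M"
    using sets.sets_into_space[OF \<open>A \<in> sets H\<close>] space_H by simp
  then have "AE \<omega> in M. \<omega> \<in> A \<longrightarrow> I Z \<omega> = I Y\<^sub>1 \<omega>"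
    using Z_eq by (intro regular_ind_local[OF assms(3) Z assms(5,4)]) auto
  moreover have "AE \<omega> in M. \<omega> \<in> space H - A \<longrightarrow> I Z \<omega> = I Y\<^sub>2 \<omega>"
    using Z_eq space_H
    by (intro regular_ind_local[OF assms(3) Z assms(6) sets.compl_sets[OF assms(4)]]) auto
  ultimately show "AE \<omega> in M. I Z \<omega> = (if \<omega> \<in> A then I Y\<^sub>1 \<omega> else I Y\<^sub>2 \<omega>)"
    using AE_space by eventually_elim (simp add: space_H)
qed

theorem mainTheorem6:
  fixes M H :: "'a measure"
    and D :: "('a \<Rightarrow> ereal) set"
    and I :: "('a \<Rightarrow> ereal) \<Rightarrow> 'a \<Rightarrow> ereal"
    and X :: "'a \<Rightarrow> ereal"
    and h :: "'a \<Rightarrow> real"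
  assumes "prob_space M"
    and "complete_sets M"
    and "subalgebra M H"
    and "complete_sub M H"
    and "cond_indicator M H D I"
    and "regular_ind M H D I"
    and "pos_homogeneous M H D I"
    and "X \<in> D"
    and "(\<lambda>\<omega>. - X \<omega>) \<in> D"
    and "h \<in> borel_measurable H"
  shows "AE \<omega> in M. I (\<lambda>\<omega>. ereal (h \<omega>) * X \<omega>) \<omega> =
           ereal (max (h \<omega>) 0) * I X \<omega> + ereal (max (- h \<omega>) 0) * I (\<lambda>\<omega>. - X \<omega>) \<omega>"
proof -
  have space_H: "space H = space M"
    using \<open>subalgebra M H\<close> by (simp add: subalgebra_def)
  define A where "A = {\<omega> \<in> space H. 0 \<le> h \<omega>}"
  have A: "A \<in> sets H"
    unfolding A_def using \<open>h \<in> borel_measurable H\<close> by measurable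
  have pos_part: "(\<lambda>\<omega>. max (h \<omega>) 0) \<in> borel_measurable H"
    using \<open>h \<in> borel_measurable H\<close> by measurable
  have neg_part: "(\<lambda>\<omega>. max (- h \<omega>) 0) \<in> borel_measurable H"
    using \<open>h \<in> borel_measurable H\<close> by measurable
  note pos_hom = pos_homogeneousD[OF \<open>pos_homogeneous M H D I\<close>]
  note pos_hom_X = pos_hom[OF pos_part max.cobounded2 \<open>X \<in> D\<close>]
  note pos_hom_neg_X = pos_hom[OF neg_part max.cobounded2 \<open>(\<lambda>\<omega>. - X \<omega>) \<in> D\<close>]
  have "X \<in> borel_measurable M"
    using \<open>cond_indicator M H D I\<close> \<open>X \<in> D\<close> by (rule cond_indicator_measurable)
  moreover have "h \<in> borel_measurable M"
    using \<open>subalgebra M H\<close> \<open>h \<in> borel_measurable H\<close> by (rule measurable_from_subalg)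
  ultimately have "(\<lambda>\<omega>. ereal (h \<omega>) * X \<omega>) \<in> borel_measurable M"
    by measurable
  with A pos_hom_X(1) pos_hom_neg_X(1)
  have "AE \<omega> in M. I (\<lambda>\<omega>. ereal (h \<omega>) * X \<omega>) \<omega> =
      (if \<omega> \<in> A then I (\<lambda>\<omega>. ereal (max (h \<omega>) 0) * X \<omega>) \<omega>
       else I (\<lambda>\<omega>. ereal (max (- h \<omega>) 0) * - X \<omega>) \<omega>)"
    by (rule regular_ind_paste[OF \<open>subalgebra M H\<close> \<open>cond_indicator M H D I\<close> \<open>regular_ind M H D I\<close>])
      (simp add: A_def space_H ereal_times_eq_pos_neg_part[of "h _"])
  with pos_hom_X(2) pos_hom_neg_X(2) AE_space show ?thesis
    by eventually_elim (simp add: A_def space_H ereal_pos_neg_part_combination del: ereal_max)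
qed

end
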